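(* Let $n\ge2$ and $\rho\in\mathbb{C}\setminus\{-1,1\}$. The following four statements are equivalent: (i) all $n$ eigenvalues of $K_n(\rho)$ lie in $\mathrm{range}\{\sigma(\rho,\theta)\}$; (ii) all $2n$ zeros of $p_{2n}(\rho,z)$ lie on the unit circle; (iii) $-1<\rho<1$; (iv) $K_n(\rho)$ is positive definite.
   Context: $K_n(\rho)=\left[\rho^{|j-k|}\right]_{j,k=1}^n$ (with $\rho^0=1$). $p_{2n}(\rho,z)=z^{2n}+(1+\rho^2)\sum_{k=1}^{n-1}z^{2k}-2\rho\sum_{k=0}^{n-1}z^{2k+1}+1$. $\sigma(\rho,\theta)=\frac{1-\rho^2}{1-2\rho\cos\theta+\rho^2}$ and $\mathrm{range}\{\sigma(\rho,\theta)\}=\{\sigma(\rho,\theta):\theta\in(-\pi,\pi],\ 1-2\rho\cos\theta+\rho^2\neq0\}$. Positive definite means $x^*K_n(\rho)x>0$ for all nonzero $x\in\mathbb{C}^n$. *)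

theory Defs
  imports "Jordan_Normal_Form.Char_Poly"
begin

text \<open>The Kac-Murdock-Szego matrix K_n(rho) = [rho^|j-k|], indices shifted to 0..n-1.\<close>
definition KMS :: "nat \<Rightarrow> complex \<Rightarrow> complex mat" where
  "KMS n \<rho> = mat n n (\<lambda>(j, k). \<rho> ^ (if k \<le> j then j - k else k - j))"

definition p2n :: "nat \<Rightarrow> complex \<Rightarrow> complex \<Rightarrow> complex" where
  "p2n n \<rho> z = z ^ (2 * n) + (1 + \<rho>\<^sup>2) * (\<Sum>k\<in>{1..n-1}. z ^ (2 * k))
      - 2 * \<rho> * (\<Sum>k\<in>{0..n-1}. z ^ (2 * k + 1)) + 1"

definition sigma :: "complex \<Rightarrow> real \<Rightarrow> complex" where
  "sigma \<rho> \<theta> = (1 - \<rho>\<^sup>2) / (1 - 2 * \<rho> * complex_of_real (cos \<theta>) + \<rho>\<^sup>2)"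

definition sigma_range :: "complex \<Rightarrow> complex set" where
  "sigma_range \<rho> = {sigma \<rho> \<theta> | \<theta>. \<theta> \<in> {-pi<..pi} \<and>
      1 - 2 * \<rho> * complex_of_real (cos \<theta>) + \<rho>\<^sup>2 \<noteq> 0}"

definition pos_def_mat :: "nat \<Rightarrow> complex mat \<Rightarrow> bool" where
  "pos_def_mat n A = (\<forall>x \<in> carrier_vec n. x \<noteq> 0\<^sub>v n \<longrightarrow>
     (let q = (\<Sum>j<n. \<Sum>k<n. cnj (x $ j) * A $$ (j, k) * x $ k) in q \<in> \<real> \<and> Re q > 0))"

end

theory Submission
  imports Defs
begin

text \<open>
  Multiplying by \<open>z\<^sup>2 - 1\<close> turns \<open>p\<^sub>2\<^sub>n(\<rho>, z) = 0\<close> into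
  \<open>(z\<^sup>n (z - \<rho>))\<^sup>2 = (1 - \<rho> z)\<^sup>2\<close>. For real \<open>|\<rho>| < 1\<close> the identity
  \<open>|z - \<rho>|\<^sup>2 - |1 - \<rho> z|\<^sup>2 = (|z|\<^sup>2 - 1)(1 - \<rho>\<^sup>2)\<close> forces \<open>|z| = 1\<close>; conversely
  a monic polynomial with all roots on the unit circle is self-inversive, which makes the
  coefficient \<open>-2\<rho>\<close> real, and for real \<open>|\<rho>| > 1\<close> the intermediate value theorem gives
  a real root inside the disc. Writing \<open>g\<^sub>m = \<Sum>\<^sub>i \<rho>\<^sup>i x\<^sub>m\<^sub>+\<^sub>i\<close>, the quadratic form of
  \<open>K\<^sub>n(\<rho>)\<close> is \<open>\<rho>\<^sup>2 |g\<^sub>0|\<^sup>2 + (1 - \<rho>\<^sup>2) \<Sum> |g\<^sub>m|\<^sup>2\<close> with \<open>x\<^sub>m = g\<^sub>m - \<rho> g\<^sub>m\<^sub>+\<^sub>1\<close>, which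
  gives positive definiteness and confines the Rayleigh quotient to
  \<open>[(1 - |\<rho>|)/(1 + |\<rho>|), (1 + |\<rho>|)/(1 - |\<rho>|)]\<close>, the range of \<open>\<sigma>(\<rho>, \<cdot>)\<close>.
  Finally \<open>(1 - \<rho>\<^sup>2) K\<^sub>n(\<rho>)\<^sup>-\<^sup>1\<close> is tridiagonal, and every root \<open>z\<close> of \<open>p\<^sub>2\<^sub>n\<close> yields
  an explicit eigenvector of \<open>K\<^sub>n(\<rho>)\<close>; if the eigenvalue lies in the range of \<open>\<sigma>\<close>,
  \<open>z\<close> solves \<open>z\<^sup>2 - 2 z cos \<theta> + 1 = 0\<close>.
\<close>

section \<open>The polynomial \<open>p\<^sub>2\<^sub>n\<close> and its roots\<close>

lemma p2n_factorization:
  assumes "n \<ge> 1"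
  shows "(z\<^sup>2 - 1) * p2n n \<rho> z = (z ^ n * (z - \<rho>))\<^sup>2 - (1 - \<rho> * z)\<^sup>2"
proof -
  define S where "S = (\<Sum>k<n. (z\<^sup>2) ^ k)"
  have geometric: "(z\<^sup>2 - 1) * S = z ^ (2 * n) - 1"
    unfolding S_def by (simp add: power_diff_1_eq power_mult)
  have "{..<n} = insert 0 {1..n-1}" using assms by auto
  then have even_part: "(\<Sum>k\<in>{1..n-1}. z ^ (2 * k)) = S - 1"
    by (simp add: S_def power_mult)
  have "{0..n-1} = {..<n}" using assms by auto
  then have odd_part: "(\<Sum>k\<in>{0..n-1}. z ^ (2 * k + 1)) = z * S"
    by (simp add: S_def sum_distrib_left power_mult)
  have "(z\<^sup>2 - 1) * p2n n \<rho> z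
      = (z\<^sup>2 - 1) * z ^ (2 * n) + (1 + \<rho>\<^sup>2) * ((z\<^sup>2 - 1) * S - (z\<^sup>2 - 1))
        - 2 * \<rho> * z * ((z\<^sup>2 - 1) * S) + (z\<^sup>2 - 1)"
    unfolding p2n_def even_part odd_part by (simp add: algebra_simps sum_negf)
  also have "\<dots> = (z ^ n * (z - \<rho>))\<^sup>2 - (1 - \<rho> * z)\<^sup>2"
  proof -
    have "z ^ (2 * n) = (z ^ n)\<^sup>2" by (simp add: power_mult mult.commute)
    moreover have "(z\<^sup>2 - 1) * w\<^sup>2 + (1 + \<rho>\<^sup>2) * ((w\<^sup>2 - 1) - (z\<^sup>2 - 1)) - 2 * \<rho> * z * (w\<^sup>2 - 1)
        + (z\<^sup>2 - 1) = (w * (z - \<rho>))\<^sup>2 - (1 - \<rho> * z)\<^sup>2" for w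
      by (simp add: power2_eq_square algebra_simps)
    ultimately show ?thesis unfolding geometric by simp
  qed
  finally show ?thesis .
qed

lemma p2n_0: "n \<ge> 1 \<Longrightarrow> p2n n \<rho> 0 = 1"
  by (simp add: p2n_def power_0_left)

lemma p2n_uminus: "p2n n (- \<rho>) (- z) = p2n n \<rho> z"
  by (simp add: p2n_def power_mult power_add sum_negf)

lemma p2n_eq_0_iff:
  assumes "n \<ge> 1" and "z\<^sup>2 \<noteq> 1"
  shows "p2n n \<rho> z = 0 \<longleftrightarrow> (z ^ n * (z - \<rho>))\<^sup>2 = (1 - \<rho> * z)\<^sup>2"
  using p2n_factorization[OF assms(1), of z \<rho>] assms(2) by auto

lemma p2n_root_factors_nonzero:
  assumes "n \<ge> 1" and "\<rho>\<^sup>2 \<noteq> 1" and "p2n n \<rho> z = 0"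
  shows "z \<noteq> 0" and "z - \<rho> \<noteq> 0" and "1 - \<rho> * z \<noteq> 0"
proof -
  show "z \<noteq> 0" using assms(3) p2n_0[OF assms(1)] by auto
  have eq: "(z ^ n * (z - \<rho>))\<^sup>2 = (1 - \<rho> * z)\<^sup>2"
    using p2n_factorization[OF assms(1), of z \<rho>] assms(3) by simp
  show "z - \<rho> \<noteq> 0"
  proof
    assume "z - \<rho> = 0"
    then have "(1 - \<rho>\<^sup>2)\<^sup>2 = 0" using eq by (simp add: power2_eq_square)
    then show False using assms(2) by simp
  qed
  then show "1 - \<rho> * z \<noteq> 0" using eq \<open>z \<noteq> 0\<close> by auto
qed

lemma p2n_root_norm_eq_1:
  assumes "n \<ge> 1" and "\<bar>r\<bar> < 1" and "p2n n (of_real r) z = 0"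
  shows "cmod z = 1"
proof -
  define t where "t = cmod z"
  have "(z ^ n * (z - of_real r))\<^sup>2 = (1 - of_real r * z)\<^sup>2"
    using p2n_factorization[OF assms(1), of z "of_real r"] assms(3) by simp
  then have "(t ^ n * cmod (z - of_real r))\<^sup>2 = (cmod (1 - of_real r * z))\<^sup>2"
    unfolding t_def by (metis norm_mult norm_power)
  moreover have "(cmod (z - of_real r))\<^sup>2 - (cmod (1 - of_real r * z))\<^sup>2 = (t\<^sup>2 - 1) * (1 - r\<^sup>2)"
    unfolding t_def cmod_power2 by (simp add: algebra_simps power2_eq_square)
  ultimately have key: "(t ^ (2 * n) - 1) * (cmod (z - of_real r))\<^sup>2 = (1 - t\<^sup>2) * (1 - r\<^sup>2)"
    by (simp add: power_mult_distrib power_mult[symmetric] mult.commute[of 2] algebra_simps)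
  have r: "1 - r\<^sup>2 > 0" using assms(2) by (simp add: abs_square_less_1)
  have "t \<ge> 0" unfolding t_def by simp
  show ?thesis
  proof (rule ccontr)
    assume "cmod z \<noteq> 1"
    then consider "t > 1" | "t < 1" unfolding t_def by linarith
    then show False
    proof cases
      case 1
      then have "(t ^ (2 * n) - 1) * (cmod (z - of_real r))\<^sup>2 \<ge> 0"
        by (simp add: one_le_power)
      moreover have "(1 - t\<^sup>2) * (1 - r\<^sup>2) < 0"
        using 1 r by (intro mult_neg_pos) (simp_all add: one_less_power)
      ultimately show False using key by linarith
    next
      case 2
      with \<open>t \<ge> 0\<close> have "(t ^ (2 * n) - 1) * (cmod (z - of_real r))\<^sup>2 \<le> 0"
        by (intro mult_nonpos_nonneg) (simp_all add: power_le_one)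
      moreover have "(1 - t\<^sup>2) * (1 - r\<^sup>2) > 0"
        using 2 \<open>t \<ge> 0\<close> r by (intro mult_pos_pos) (simp_all add: power_less_one_iff)
      ultimately show False using key by linarith
    qed
  qed
qed

lemma p2n_root_in_unit_interval:
  assumes "n \<ge> 1" and "s > 1"
  shows "\<exists>x. 0 < x \<and> x < 1 \<and> p2n n (of_real s) (of_real x) = 0"
proof -
  define f where "f x = x ^ n * (x - s) + (1 - s * x)" for x :: real
  have f0: "f 0 = 1" and f1: "f 1 = 2 - 2 * s"
    unfolding f_def using assms(1) by (simp_all add: power_0_left)
  have "continuous_on {0..1} f" unfolding f_def by (intro continuous_intros)
  then obtain x where "0 \<le> x" "x \<le> 1" "f x = 0"
    using IVT2'[of f 1 0 0] f0 f1 assms(2) by auto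
  moreover from this have "x \<noteq> 0" "x \<noteq> 1" using f0 f1 assms(2) by auto
  ultimately have x: "0 < x" "x < 1" "f x = 0" by auto
  define z where "z = complex_of_real x"
  have "z ^ n * (z - of_real s) = - (1 - of_real s * z)"
  proof -
    have "x ^ n * (x - s) = - (1 - s * x)" using x(3) unfolding f_def by simp
    then show ?thesis unfolding z_def by (metis of_real_1 of_real_diff of_real_mult
        of_real_power of_real_minus)
  qed
  moreover have "z\<^sup>2 \<noteq> 1"
  proof -
    have "x\<^sup>2 < 1" using x(1,2) by (simp add: power_less_one_iff)
    then show ?thesis unfolding z_def by (metis less_irrefl of_real_eq_1_iff of_real_power)
  qed
  ultimately have "p2n n (of_real s) z = 0"
    using p2n_eq_0_iff[OF assms(1)] by (metis power2_minus)
  then show ?thesis using x(1,2) unfolding z_def by blast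
qed

lemma p2n_root_off_circle:
  assumes "n \<ge> 1" and "\<bar>r\<bar> > 1"
  shows "\<exists>z. p2n n (of_real r) z = 0 \<and> cmod z \<noteq> 1"
proof (cases "r > 1")
  case True
  then obtain x where "0 < x" "x < 1" "p2n n (of_real r) (of_real x) = 0"
    using p2n_root_in_unit_interval[OF assms(1)] by blast
  then show ?thesis by (intro exI[of _ "of_real x"]) simp
next
  case False
  with assms(2) have "- r > 1" by linarith
  then obtain x where "0 < x" "x < 1" "p2n n (of_real (- r)) (of_real x) = 0"
    using p2n_root_in_unit_interval[OF assms(1)] by blast
  then show ?thesis
    using p2n_uminus[of n "of_real r" "- of_real x"] by (intro exI[of _ "- of_real x"]) simp
qed

definition kms_poly :: "nat \<Rightarrow> complex \<Rightarrow> complex poly" where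
  "kms_poly n \<rho> = monom 1 (2 * n) + Polynomial.smult (1 + \<rho>\<^sup>2) (\<Sum>k\<in>{1..n-1}. monom 1 (2 * k))
     - Polynomial.smult (2 * \<rho>) (\<Sum>k\<in>{0..n-1}. monom 1 (2 * k + 1)) + 1"

lemma poly_kms_poly: "poly (kms_poly n \<rho>) = p2n n \<rho>"
  by (simp add: fun_eq_iff kms_poly_def p2n_def poly_sum poly_monom)

lemma coeff_kms_poly_odd:
  assumes "m < n"
  shows "coeff (kms_poly n \<rho>) (2 * m + 1) = - 2 * \<rho>"
proof -
  have [simp]: "2 * k \<noteq> Suc (2 * m)" for k by presburger
  have "(\<Sum>k\<in>{0..n-1}. coeff (monom 1 (2 * k + 1)) (2 * m + 1))
      = (\<Sum>k\<in>{0..n-1}. if k = m then 1 else (0::complex))"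
    by (intro sum.cong) (auto simp: coeff_monom)
  also have "\<dots> = 1" using assms by simp
  finally show ?thesis
    by (simp add: kms_poly_def coeff_sum coeff_monom)
qed

lemma coeff_kms_poly_top:
  assumes "n \<ge> 1"
  shows "coeff (kms_poly n \<rho>) (2 * n) = 1" and "2 * n < j \<Longrightarrow> coeff (kms_poly n \<rho>) j = 0"
proof -
  have vanish: "(\<Sum>k\<in>{1..n-1}. coeff (monom 1 (2 * k)) j) = (0::complex)"
    "(\<Sum>k\<in>{0..n-1}. coeff (monom 1 (2 * k + 1)) j) = (0::complex)" if "2 * n \<le> j" for j
    using that assms by (auto simp: coeff_monom intro!: sum.neutral)
  show "coeff (kms_poly n \<rho>) (2 * n) = 1"
    using vanish[of "2 * n"] assms by (simp add: kms_poly_def coeff_sum)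
  show "2 * n < j \<Longrightarrow> coeff (kms_poly n \<rho>) j = 0"
    using vanish[of j] by (simp add: kms_poly_def coeff_sum)
qed

lemma degree_kms_poly: "n \<ge> 1 \<Longrightarrow> degree (kms_poly n \<rho>) = 2 * n"
  using coeff_kms_poly_top by (intro antisym degree_le le_degree) auto

lemma lead_coeff_kms_poly: "n \<ge> 1 \<Longrightarrow> lead_coeff (kms_poly n \<rho>) = 1"
  by (simp add: degree_kms_poly coeff_kms_poly_top)

lemma reflect_poly_unimodular_roots:
  fixes p :: "complex poly"
  assumes monic: "lead_coeff p = 1" and roots: "\<And>z. poly p z = 0 \<Longrightarrow> cmod z = 1"
  shows "reflect_poly p = Polynomial.smult (poly p 0) (map_poly cnj p)"
proof -
  obtain as where "Polynomial.smult (lead_coeff p) (\<Prod>a\<leftarrow>as. [:- a, 1:]) = p"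
    using fundamental_theorem_algebra_factorized by blast
  then have p: "p = (\<Prod>a\<leftarrow>as. [:- a, 1:])" using monic by simp
  have "cnj a * a = 1" if "a \<in> set as" for a
  proof -
    have "poly p a = 0" using that by (auto simp: p poly_prod_list prod_list_zero_iff)
    then show ?thesis using roots by (metis complex_norm_square mult.commute of_real_1 power_one)
  qed
  then have "(\<Prod>a\<leftarrow>as. 1 - a * z) = (\<Prod>a\<leftarrow>as. - a) * cnj (\<Prod>a\<leftarrow>as. cnj z - a)" for z
    by (induction as) (auto simp: algebra_simps)
  then have "poly (reflect_poly p) z = poly (Polynomial.smult (poly p 0) (map_poly cnj p)) z" for z
    by (simp add: p reflect_poly_prod_list poly_prod_list o_def reflect_poly_pCons' poly_monom)
  then show ?thesis by (simp add: poly_eq_poly_eq_iff[symmetric] fun_eq_iff)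
qed

lemma p2n_unimodular_roots_imp_real:
  assumes "n \<ge> 1" and roots: "\<And>z. p2n n \<rho> z = 0 \<Longrightarrow> cmod z = 1"
  shows "\<rho> \<in> \<real>"
proof -
  let ?p = "kms_poly n \<rho>"
  obtain m where n: "n = Suc m" using assms(1) by (cases n) auto
  have "reflect_poly ?p = Polynomial.smult (poly ?p 0) (map_poly cnj ?p)"
  proof (rule reflect_poly_unimodular_roots)
    show "lead_coeff ?p = 1" using assms(1) by (rule lead_coeff_kms_poly)
    show "cmod z = 1" if "poly ?p z = 0" for z using that roots by (simp add: poly_kms_poly)
  qed
  then have "coeff (reflect_poly ?p) 1 = cnj (coeff ?p (2 * 0 + 1))"
    using assms(1) by (simp add: poly_kms_poly p2n_0 coeff_map_poly)
  moreover have "coeff (reflect_poly ?p) 1 = coeff ?p (2 * m + 1)"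
    using n by (simp add: coeff_reflect_poly degree_kms_poly)
  moreover have "coeff ?p (2 * 0 + 1) = - 2 * \<rho>" "coeff ?p (2 * m + 1) = - 2 * \<rho>"
    using n by (simp_all only: coeff_kms_poly_odd)
  ultimately have "cnj \<rho> = \<rho>" by simp
  then show ?thesis by (simp only: Reals_cnj_iff)
qed

section \<open>The quadratic form of \<open>K\<^sub>n(\<rho>)\<close>\<close>

definition nat_dist :: "nat \<Rightarrow> nat \<Rightarrow> nat" where
  "nat_dist j k = (if k \<le> j then j - k else k - j)"

lemma nat_dist_simps [simp]:
  "nat_dist (Suc j) (Suc k) = nat_dist j k" "nat_dist 0 k = k" "nat_dist k 0 = k"
  by (simp_all add: nat_dist_def)

lemma KMS_carrier: "KMS n \<rho> \<in> carrier_mat n n"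
  by (simp add: KMS_def)

lemma index_KMS: "i < n \<Longrightarrow> j < n \<Longrightarrow> KMS n \<rho> $$ (i, j) = \<rho> ^ nat_dist i j"
  by (simp add: KMS_def nat_dist_def)

lemma KMS_mult_vec_index:
  assumes "v \<in> carrier_vec n" and "i < n"
  shows "(KMS n \<rho> *\<^sub>v v) $ i = (\<Sum>k<n. \<rho> ^ nat_dist i k * v $ k)"
  using assms KMS_carrier[of n \<rho>]
  by (auto simp: scalar_prod_def index_KMS lessThan_atLeast0 intro!: sum.cong)

definition kms_form :: "nat \<Rightarrow> complex \<Rightarrow> (nat \<Rightarrow> complex) \<Rightarrow> complex" where
  "kms_form n \<rho> x = (\<Sum>j<n. \<Sum>k<n. cnj (x j) * \<rho> ^ nat_dist j k * x k)"

lemma KMS_quadratic_form: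
  "(\<Sum>j<n. \<Sum>k<n. cnj (x $ j) * KMS n \<rho> $$ (j, k) * x $ k) = kms_form n \<rho> (($) x)"
  by (simp add: kms_form_def index_KMS)

definition kms_tail :: "nat \<Rightarrow> complex \<Rightarrow> (nat \<Rightarrow> complex) \<Rightarrow> nat \<Rightarrow> complex" where
  "kms_tail n \<rho> x m = (\<Sum>i<n-m. \<rho> ^ i * x (m + i))"

lemma kms_tail_Suc_0: "kms_tail (Suc n) \<rho> x 0 = x 0 + \<rho> * kms_tail n \<rho> (\<lambda>j. x (Suc j)) 0"
  by (simp add: kms_tail_def sum.lessThan_Suc_shift sum_distrib_left algebra_simps
      del: sum.lessThan_Suc)

lemma kms_tail_Suc_Suc: "kms_tail (Suc n) \<rho> x (Suc m) = kms_tail n \<rho> (\<lambda>j. x (Suc j)) m"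
  by (simp add: kms_tail_def)

lemma kms_tail_rec:
  assumes "m < n"
  shows "kms_tail n \<rho> x m = x m + \<rho> * kms_tail n \<rho> x (Suc m)"
proof -
  have "n - m = Suc (n - Suc m)" using assms by simp
  then show ?thesis
    by (simp add: kms_tail_def sum.lessThan_Suc_shift sum_distrib_left algebra_simps
        del: sum.lessThan_Suc)
qed

lemma kms_tail_end [simp]: "kms_tail n \<rho> x n = 0"
  by (simp add: kms_tail_def)

lemma kms_form_tail_expansion:
  assumes "cnj \<rho> = \<rho>"
  shows "kms_form n \<rho> x = \<rho>\<^sup>2 * (kms_tail n \<rho> x 0 * cnj (kms_tail n \<rho> x 0))
           + (1 - \<rho>\<^sup>2) * (\<Sum>m<n. kms_tail n \<rho> x m * cnj (kms_tail n \<rho> x m))"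
proof (induction n arbitrary: x)
  case 0
  then show ?case by (simp add: kms_form_def kms_tail_def)
next
  case (Suc n)
  define y where "y = (\<lambda>j. x (Suc j))"
  define G where "G = kms_tail n \<rho> y 0"
  have G_cnj: "cnj G = (\<Sum>i<n. \<rho> ^ i * cnj (x (Suc i)))"
    using assms by (simp add: G_def y_def kms_tail_def)
  have "kms_form (Suc n) \<rho> x = cnj (x 0) * x 0 + (\<Sum>k<n. cnj (x 0) * \<rho> ^ Suc k * x (Suc k))
      + (\<Sum>j<n. cnj (x (Suc j)) * \<rho> ^ Suc j * x 0) + kms_form n \<rho> y"
    by (simp add: kms_form_def y_def sum.lessThan_Suc_shift sum.distrib del: sum.lessThan_Suc)
  also have "(\<Sum>k<n. cnj (x 0) * \<rho> ^ Suc k * x (Suc k)) = cnj (x 0) * \<rho> * G"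
    by (simp add: G_def y_def kms_tail_def sum_distrib_left algebra_simps)
  also have "(\<Sum>j<n. cnj (x (Suc j)) * \<rho> ^ Suc j * x 0) = x 0 * \<rho> * cnj G"
    by (simp add: G_cnj sum_distrib_left algebra_simps)
  finally have form: "kms_form (Suc n) \<rho> x
      = cnj (x 0) * x 0 + cnj (x 0) * \<rho> * G + x 0 * \<rho> * cnj G + kms_form n \<rho> y" .
  have tails: "(\<Sum>m<Suc n. kms_tail (Suc n) \<rho> x m * cnj (kms_tail (Suc n) \<rho> x m))
     = (x 0 + \<rho> * G) * cnj (x 0 + \<rho> * G) + (\<Sum>m<n. kms_tail n \<rho> y m * cnj (kms_tail n \<rho> y m))"
    by (simp add: sum.lessThan_Suc_shift kms_tail_Suc_0 kms_tail_Suc_Suc G_def y_def del: sum.lessThan_Suc)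
  show ?case
    unfolding form tails Suc.IH[of y] kms_tail_Suc_0 y_def[symmetric] G_def[symmetric]
    using assms by (simp add: algebra_simps power2_eq_square)
qed

lemma kms_form_of_real:
  "kms_form n (of_real r) x = of_real (r\<^sup>2 * (cmod (kms_tail n (of_real r) x 0))\<^sup>2
     + (1 - r\<^sup>2) * (\<Sum>m<n. (cmod (kms_tail n (of_real r) x m))\<^sup>2))"
  by (simp add: kms_form_tail_expansion complex_norm_square[symmetric])

lemma norm_diff_scaled_sq_le:
  fixes u w :: complex
  shows "(cmod (u - of_real r * w))\<^sup>2 \<le> (1 + \<bar>r\<bar>) * ((cmod u)\<^sup>2 + \<bar>r\<bar> * (cmod w)\<^sup>2)"
proof -
  define a p q where "a = \<bar>r\<bar>" and "p = cmod u" and "q = cmod w"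
  have "cmod (u - of_real r * w) \<le> p + a * q"
    unfolding a_def p_def q_def using norm_triangle_ineq4[of u "of_real r * w"] by (simp add: norm_mult)
  then have "(cmod (u - of_real r * w))\<^sup>2 \<le> (p + a * q)\<^sup>2" by (simp add: power_mono)
  moreover have "(1 + a) * (p\<^sup>2 + a * q\<^sup>2) = (p + a * q)\<^sup>2 + a * (p - q)\<^sup>2"
    by (simp add: power2_eq_square algebra_simps)
  moreover have "a * (p - q)\<^sup>2 \<ge> 0" by (simp add: a_def)
  ultimately show ?thesis unfolding a_def p_def q_def by linarith
qed

lemma norm_diff_scaled_sq_ge:
  fixes u w :: complex
  assumes "\<bar>r\<bar> \<le> 1"
  shows "(1 - \<bar>r\<bar>) * ((cmod u)\<^sup>2 - \<bar>r\<bar> * (cmod w)\<^sup>2) \<le> (cmod (u - of_real r * w))\<^sup>2"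
proof -
  define a p q where "a = \<bar>r\<bar>" and "p = cmod u" and "q = cmod w"
  have a: "0 \<le> a" "a \<le> 1" and "0 \<le> q" using assms by (simp_all add: a_def q_def)
  show ?thesis
  proof (cases "a * q \<le> p")
    case True
    have "p - a * q \<le> cmod (u - of_real r * w)"
      unfolding a_def p_def q_def using norm_triangle_ineq2[of u "of_real r * w"] by (simp add: norm_mult)
    then have "(p - a * q)\<^sup>2 \<le> (cmod (u - of_real r * w))\<^sup>2" using True by (simp add: power_mono)
    moreover have "(p - a * q)\<^sup>2 = (1 - a) * (p\<^sup>2 - a * q\<^sup>2) + a * (p - q)\<^sup>2"
      by (simp add: power2_eq_square algebra_simps)
    moreover have "a * (p - q)\<^sup>2 \<ge> 0" using a by simp
    ultimately show ?thesis unfolding a_def p_def q_def by linarith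
  next
    case False
    then have "p\<^sup>2 \<le> (a * q)\<^sup>2" by (simp add: p_def power_mono)
    also have "\<dots> = a * (a * q\<^sup>2)" by (simp add: power2_eq_square)
    also have "\<dots> \<le> a * q\<^sup>2" using a by (intro mult_left_le_one_le) simp_all
    finally have "(1 - a) * (p\<^sup>2 - a * q\<^sup>2) \<le> 0" using a by (simp add: mult_nonneg_nonpos)
    moreover have "0 \<le> (cmod (u - of_real r * w))\<^sup>2" by simp
    ultimately show ?thesis unfolding a_def p_def q_def by linarith
  qed
qed

lemma kms_tail_norm_bounds:
  fixes n :: nat and x :: "nat \<Rightarrow> complex"
  assumes "\<bar>r\<bar> < 1"
  defines "N \<equiv> \<Sum>m<n. (cmod (x m))\<^sup>2"
    and "S \<equiv> \<Sum>m<n. (cmod (kms_tail n (of_real r) x m))\<^sup>2"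
    and "G0 \<equiv> (cmod (kms_tail n (of_real r) x 0))\<^sup>2"
  shows "(1 - \<bar>r\<bar>) * ((1 - \<bar>r\<bar>) * S + \<bar>r\<bar> * G0) \<le> N"
    and "N \<le> (1 + \<bar>r\<bar>) * ((1 + \<bar>r\<bar>) * S - \<bar>r\<bar> * G0)"
proof -
  define a where "a = \<bar>r\<bar>"
  define G where "G m = (cmod (kms_tail n (of_real r) x m))\<^sup>2" for m
  have S: "S = (\<Sum>m<n. G m)" and G0: "G0 = G 0" by (simp_all add: S_def G_def G0_def)
  have shifted: "(\<Sum>m<n. G (Suc m)) = S - G 0"
    using sum.lessThan_Suc_shift[of G n] by (simp add: S G_def)
  have x: "(cmod (x m))\<^sup>2 = (cmod (kms_tail n (of_real r) x m - of_real r * kms_tail n (of_real r) x (Suc m)))\<^sup>2"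
    if "m < n" for m
    using kms_tail_rec[OF that, of "of_real r" x] by (simp add: algebra_simps)
  have "(1 - a) * ((1 - a) * S + a * G 0) = (1 - a) * (S - a * (S - G 0))"
    by (simp add: algebra_simps)
  also have "\<dots> = (\<Sum>m<n. (1 - a) * (G m - a * G (Suc m)))"
    by (simp add: sum_subtractf sum_distrib_left[symmetric] shifted S)
  also have "\<dots> \<le> N"
    unfolding N_def using assms(1)
    by (intro sum_mono) (simp add: x norm_diff_scaled_sq_ge G_def a_def)
  finally show "(1 - \<bar>r\<bar>) * ((1 - \<bar>r\<bar>) * S + \<bar>r\<bar> * G0) \<le> N" unfolding a_def G0 .
  have "N \<le> (\<Sum>m<n. (1 + a) * (G m + a * G (Suc m)))"
    unfolding N_def by (intro sum_mono) (simp add: x norm_diff_scaled_sq_le G_def a_def)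
  also have "\<dots> = (1 + a) * (S + a * (S - G 0))"
    by (simp add: sum.distrib sum_distrib_left[symmetric] shifted S)
  finally show "N \<le> (1 + \<bar>r\<bar>) * ((1 + \<bar>r\<bar>) * S - \<bar>r\<bar> * G0)"
    unfolding a_def G0 by (simp add: algebra_simps)
qed

lemma kms_form_bounds:
  fixes n :: nat and x :: "nat \<Rightarrow> complex"
  assumes "\<bar>r\<bar> < 1"
  defines "N \<equiv> \<Sum>m<n. (cmod (x m))\<^sup>2" and "F \<equiv> Re (kms_form n (of_real r) x)"
  shows "(1 - \<bar>r\<bar>) * N \<le> (1 + \<bar>r\<bar>) * F" and "(1 - \<bar>r\<bar>) * F \<le> (1 + \<bar>r\<bar>) * N"
proof -
  define a where "a = \<bar>r\<bar>"
  define S where "S = (\<Sum>m<n. (cmod (kms_tail n (of_real r) x m))\<^sup>2)"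
  define G0 where "G0 = (cmod (kms_tail n (of_real r) x 0))\<^sup>2"
  have a: "0 \<le> a" "a < 1" using assms(1) by (simp_all add: a_def)
  have "G0 \<ge> 0" by (simp add: G0_def)
  have F: "F = a\<^sup>2 * G0 + (1 - a\<^sup>2) * S"
    by (simp add: F_def kms_form_of_real G0_def S_def a_def)
  have N_ge: "(1 - a) * ((1 - a) * S + a * G0) \<le> N"
    and N_le: "N \<le> (1 + a) * ((1 + a) * S - a * G0)"
    unfolding N_def S_def G0_def a_def using kms_tail_norm_bounds[OF assms(1)] by blast+
  have "(1 - a) * N \<le> (1 - a) * ((1 + a) * ((1 + a) * S - a * G0))"
    using N_le a by (simp add: mult_left_mono)
  moreover have "(1 + a) * F = (1 - a) * ((1 + a) * ((1 + a) * S - a * G0)) + (1 + a) * a * G0"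
    by (simp add: F power2_eq_square algebra_simps)
  moreover have "(1 + a) * a * G0 \<ge> 0" using a \<open>G0 \<ge> 0\<close> by simp
  ultimately show "(1 - \<bar>r\<bar>) * N \<le> (1 + \<bar>r\<bar>) * F" unfolding a_def by linarith
  have "(1 + a) * ((1 - a) * ((1 - a) * S + a * G0)) \<le> (1 + a) * N"
    using N_ge a by (simp add: mult_left_mono)
  moreover have "(1 + a) * ((1 - a) * ((1 - a) * S + a * G0)) = (1 - a) * F + (1 - a) * a * G0"
    by (simp add: F power2_eq_square algebra_simps)
  moreover have "(1 - a) * a * G0 \<ge> 0" using a \<open>G0 \<ge> 0\<close> by simp
  ultimately show "(1 - \<bar>r\<bar>) * F \<le> (1 + \<bar>r\<bar>) * N" unfolding a_def by linarith
qed

lemma kms_form_real: "kms_form n (of_real r) x \<in> \<real>"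
  by (simp add: kms_form_of_real)

lemma kms_form_pos:
  assumes "\<bar>r\<bar> < 1" and "j < n" and "x j \<noteq> 0"
  shows "Re (kms_form n (of_real r) x) > 0"
proof -
  have "(\<Sum>m<n. (cmod (x m))\<^sup>2) > 0"
    by (rule sum_pos2[of "{..<n}" j]) (use assms(2,3) in auto)
  then have "(1 - \<bar>r\<bar>) * (\<Sum>m<n. (cmod (x m))\<^sup>2) > 0" using assms(1) by simp
  then have "(1 + \<bar>r\<bar>) * Re (kms_form n (of_real r) x) > 0"
    using kms_form_bounds(1)[OF assms(1), where n=n and x=x] by linarith
  moreover have "0 < 1 + \<bar>r\<bar>" by simp
  ultimately show ?thesis using zero_less_mult_pos by blast
qed

lemma vec_nonzero_index: "x \<in> carrier_vec n \<Longrightarrow> x \<noteq> 0\<^sub>v n \<Longrightarrow> \<exists>j<n. x $ j \<noteq> 0"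
  by (metis carrier_vecD eq_vecI index_zero_vec)

lemma KMS_pos_def:
  assumes "\<bar>r\<bar> < 1"
  shows "pos_def_mat n (KMS n (of_real r))"
  unfolding pos_def_mat_def Let_def KMS_quadratic_form
proof (intro ballI impI conjI)
  fix x :: "complex vec" assume "x \<in> carrier_vec n" "x \<noteq> 0\<^sub>v n"
  then obtain j where "j < n" "x $ j \<noteq> 0" using vec_nonzero_index by blast
  then show "Re (kms_form n (of_real r) (($) x)) > 0" using kms_form_pos[OF assms] by blast
qed (rule kms_form_real)

lemma kms_form_cong: "(\<And>j. j < n \<Longrightarrow> x j = y j) \<Longrightarrow> kms_form n \<rho> x = kms_form n \<rho> y"
  by (simp add: kms_form_def)

lemma kms_form_truncate:
  assumes "m \<le> n" and "\<And>j. m \<le> j \<Longrightarrow> x j = 0"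
  shows "kms_form n \<rho> x = kms_form m \<rho> x"
proof -
  have "kms_form n \<rho> x = (\<Sum>j<m. \<Sum>k<n. cnj (x j) * \<rho> ^ nat_dist j k * x k)"
    unfolding kms_form_def using assms by (intro sum.mono_neutral_right) auto
  also have "\<dots> = kms_form m \<rho> x"
    unfolding kms_form_def using assms by (intro sum.cong refl sum.mono_neutral_right) auto
  finally show ?thesis .
qed

lemma kms_form_two_point:
  assumes "n \<ge> 2"
  shows "kms_form n \<rho> (\<lambda>j. if j = 0 then 1 else if j = 1 then of_real s else 0)
    = 1 + 2 * of_real s * \<rho> + (of_real s)\<^sup>2"
  using assms
  by (subst kms_form_truncate[where m = 2])
    (auto simp: kms_form_def numeral_2_eq_2 power2_eq_square nat_dist_def)

lemma KMS_pos_def_imp_real_unit_interval: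
  assumes "n \<ge> 2" and "pos_def_mat n (KMS n \<rho>)"
  shows "\<rho> \<in> \<real> \<and> -1 < Re \<rho> \<and> Re \<rho> < 1"
proof -
  have test: "1 + 2 * of_real s * \<rho> + (of_real s)\<^sup>2 \<in> \<real> \<and> Re (1 + 2 * of_real s * \<rho> + (of_real s)\<^sup>2) > 0"
    for s
  proof -
    define f where "f = (\<lambda>j::nat. if j = 0 then 1 else if j = 1 then complex_of_real s else 0)"
    have "vec n f \<in> carrier_vec n" "vec n f \<noteq> 0\<^sub>v n"
      using assms(1) by (auto simp: f_def dest!: arg_cong[of _ _ "\<lambda>v. v $ 0"])
    then have "kms_form n \<rho> (($) (vec n f)) \<in> \<real> \<and> Re (kms_form n \<rho> (($) (vec n f))) > 0"
      using assms(2) unfolding pos_def_mat_def Let_def KMS_quadratic_form by blast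
    moreover have "kms_form n \<rho> (($) (vec n f)) = kms_form n \<rho> f"
      by (rule kms_form_cong) simp
    ultimately show ?thesis
      using kms_form_two_point[OF assms(1), of \<rho> s] by (simp add: f_def)
  qed
  from test[of 1] test[of "-1"] show ?thesis
    by (auto simp: complex_is_Real_iff)
qed

section \<open>Eigenvalues of \<open>K\<^sub>n(\<rho>)\<close> for real \<open>\<rho>\<close>\<close>

lemma one_minus_sq_divide_bounds:
  fixes a t :: real
  assumes "0 \<le> a" and "a < 1"
    and lower: "(1 - a) / (1 + a) \<le> t" and upper: "t \<le> (1 + a) / (1 - a)"
  shows "0 < t" and "(1 - a)\<^sup>2 \<le> (1 - a\<^sup>2) / t" and "(1 - a\<^sup>2) / t \<le> (1 + a)\<^sup>2"
proof -
  have "0 < (1 - a) / (1 + a)" using assms(1,2) by simp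
  with lower show t: "0 < t" by linarith
  have squares: "1 - a\<^sup>2 = (1 - a) * (1 + a)" "(1 - a)\<^sup>2 = (1 - a) * (1 - a)"
    "(1 + a)\<^sup>2 = (1 + a) * (1 + a)"
    by (simp_all add: power2_eq_square algebra_simps)
  have "t * (1 - a) \<le> 1 + a" using upper assms(2) by (simp add: pos_le_divide_eq)
  then have "(1 - a) * (t * (1 - a)) \<le> (1 - a) * (1 + a)" using assms(2) by (simp add: mult_left_mono)
  then show "(1 - a)\<^sup>2 \<le> (1 - a\<^sup>2) / t"
    using t by (simp add: pos_le_divide_eq squares) (simp add: algebra_simps)
  have "1 - a \<le> t * (1 + a)" using lower assms(1) by (simp add: pos_divide_le_eq)
  then have "(1 + a) * (1 - a) \<le> (1 + a) * (t * (1 + a))" using assms(1) by (simp add: mult_left_mono)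
  then show "(1 - a\<^sup>2) / t \<le> (1 + a)\<^sup>2"
    using t by (simp add: pos_divide_le_eq squares) (simp add: algebra_simps)
qed

lemma sigma_of_real_attains:
  fixes r t :: real
  assumes r: "\<bar>r\<bar> < 1"
    and "(1 - \<bar>r\<bar>) / (1 + \<bar>r\<bar>) \<le> t" and "t \<le> (1 + \<bar>r\<bar>) / (1 - \<bar>r\<bar>)"
  obtains \<theta> where "- pi < \<theta>" "\<theta> \<le> pi" "1 - 2 * r * cos \<theta> + r\<^sup>2 > 0"
    "t = (1 - r\<^sup>2) / (1 - 2 * r * cos \<theta> + r\<^sup>2)"
proof -
  define a where "a = \<bar>r\<bar>"
  define D where "D = (1 - a\<^sup>2) / t"
  have a: "0 \<le> a" "a < 1" and r2: "r\<^sup>2 = a\<^sup>2" using r by (simp_all add: a_def)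
  have t: "0 < t" and D_lower: "(1 - a)\<^sup>2 \<le> D" and D_upper: "D \<le> (1 + a)\<^sup>2"
    using one_minus_sq_divide_bounds[OF a] assms(2,3) unfolding D_def a_def by auto
  define c where "c = (if r = 0 then 1 else (1 + r\<^sup>2 - D) / (2 * r))"
  have "\<bar>c\<bar> \<le> 1"
  proof (cases "r = 0")
    case False
    have "(1 - a)\<^sup>2 = 1 + a\<^sup>2 - 2 * a" "(1 + a)\<^sup>2 = 1 + a\<^sup>2 + 2 * a"
      by (simp_all add: power2_eq_square algebra_simps)
    then have "\<bar>1 + r\<^sup>2 - D\<bar> \<le> 2 * a" using D_lower D_upper unfolding r2 by linarith
    moreover have "0 < 2 * a" using False by (simp add: a_def)
    ultimately show ?thesis using False by (simp add: c_def a_def abs_divide abs_mult)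
  qed (simp add: c_def)
  then have c: "- 1 \<le> c" "c \<le> 1" by auto
  define \<theta> where "\<theta> = arccos c"
  have \<theta>: "- pi < \<theta>" "\<theta> \<le> pi" "cos \<theta> = c"
    using arccos_lbound[OF c] arccos_ubound[OF c] cos_arccos[OF c] pi_gt_zero
    unfolding \<theta>_def by linarith+
  have den: "1 - 2 * r * cos \<theta> + r\<^sup>2 = D"
  proof (cases "r = 0")
    case True
    then show ?thesis using D_lower D_upper by (simp add: a_def)
  qed (simp add: \<theta>(3) c_def)
  have "(1 - a)\<^sup>2 > 0" using a by simp
  then have "D > 0" using D_lower by linarith
  have "D * t = 1 - r\<^sup>2" using t by (simp add: D_def r2)
  then have "t = (1 - r\<^sup>2) / D" using \<open>D > 0\<close> by (simp add: eq_divide_eq mult.commute)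
  then show ?thesis using that \<theta>(1,2) \<open>D > 0\<close> unfolding den[symmetric] by blast
qed

lemma sigma_of_real: "sigma (of_real r) \<theta> = of_real ((1 - r\<^sup>2) / (1 - 2 * r * cos \<theta> + r\<^sup>2))"
  by (simp add: sigma_def)

lemma of_real_in_sigma_range:
  assumes "\<bar>r\<bar> < 1"
    and "(1 - \<bar>r\<bar>) / (1 + \<bar>r\<bar>) \<le> t" and "t \<le> (1 + \<bar>r\<bar>) / (1 - \<bar>r\<bar>)"
  shows "of_real t \<in> sigma_range (of_real r)"
proof -
  obtain \<theta> where \<theta>: "- pi < \<theta>" "\<theta> \<le> pi" "1 - 2 * r * cos \<theta> + r\<^sup>2 > 0"
    "t = (1 - r\<^sup>2) / (1 - 2 * r * cos \<theta> + r\<^sup>2)"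
    using sigma_of_real_attains[OF assms] .
  have den: "1 - 2 * of_real r * complex_of_real (cos \<theta>) + (of_real r)\<^sup>2
      = of_real (1 - 2 * r * cos \<theta> + r\<^sup>2)"
    by simp
  have "of_real t = sigma (of_real r) \<theta>" using \<theta>(4) by (simp add: sigma_of_real)
  moreover have "1 - 2 * of_real r * complex_of_real (cos \<theta>) + (of_real r)\<^sup>2 \<noteq> 0"
    unfolding den of_real_eq_0_iff using \<theta>(3) by simp
  moreover have "\<theta> \<in> {-pi<..pi}" using \<theta>(1,2) by simp
  ultimately show ?thesis unfolding sigma_range_def by blast
qed

lemma kms_form_mult_vec:
  assumes "v \<in> carrier_vec n"
  shows "kms_form n \<rho> (($) v) = (\<Sum>j<n. cnj (v $ j) * (KMS n \<rho> *\<^sub>v v) $ j)"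
  using assms by (simp add: kms_form_def KMS_mult_vec_index sum_distrib_left mult.assoc)

lemma KMS_eigenvalue_in_sigma_range:
  assumes r: "\<bar>r\<bar> < 1" and "eigenvalue (KMS n (of_real r)) e"
  shows "e \<in> sigma_range (of_real r)"
proof -
  obtain v where v: "v \<in> carrier_vec n" "v \<noteq> 0\<^sub>v n" "KMS n (of_real r) *\<^sub>v v = e \<cdot>\<^sub>v v"
    using assms(2) KMS_carrier unfolding eigenvalue_def eigenvector_def by (metis carrier_matD(1))
  define N where "N = (\<Sum>m<n. (cmod (v $ m))\<^sup>2)"
  define F where "F = Re (kms_form n (of_real r) (($) v))"
  have "of_real F = kms_form n (of_real r) (($) v)" by (simp add: F_def kms_form_real)
  also have "\<dots> = (\<Sum>j<n. e * (v $ j * cnj (v $ j)))"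
    using v by (auto simp: kms_form_mult_vec intro!: sum.cong)
  also have "\<dots> = e * of_real N"
    by (simp add: N_def sum_distrib_left complex_norm_square[symmetric])
  finally have "of_real F = e * of_real N" .
  moreover obtain j where "j < n" "v $ j \<noteq> 0" using vec_nonzero_index v(1,2) by blast
  then have "N > 0" unfolding N_def by (intro sum_pos2[of "{..<n}" j]) auto
  ultimately have e: "e = of_real (F / N)" by (simp add: field_simps)
  have "(1 - \<bar>r\<bar>) * N \<le> (1 + \<bar>r\<bar>) * F" "(1 - \<bar>r\<bar>) * F \<le> (1 + \<bar>r\<bar>) * N"
    unfolding N_def F_def using kms_form_bounds[OF r] by blast+
  with \<open>N > 0\<close> r have "(1 - \<bar>r\<bar>) / (1 + \<bar>r\<bar>) \<le> F / N" "F / N \<le> (1 + \<bar>r\<bar>) / (1 - \<bar>r\<bar>)"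
    by (simp_all add: field_simps)
  then show ?thesis unfolding e by (rule of_real_in_sigma_range[OF r])
qed

section \<open>Eigenvectors of \<open>K\<^sub>n(\<rho>)\<close> from roots of \<open>p\<^sub>2\<^sub>n\<close>\<close>

text \<open>\<open>kms_tridiag n \<rho>\<close> is \<open>(1 - \<rho>\<^sup>2) K\<^sub>n(\<rho>)\<^sup>-\<^sup>1\<close> (for \<open>n \<ge> 2\<close>).\<close>

definition kms_tridiag :: "nat \<Rightarrow> complex \<Rightarrow> nat \<Rightarrow> nat \<Rightarrow> complex" where
  "kms_tridiag n \<rho> i j =
     (if i = j then (if i = 0 \<or> i = n - 1 then 1 else 1 + \<rho>\<^sup>2)
      else if j = i + 1 \<or> i = j + 1 then - \<rho> else 0)"

lemma kms_tridiag_commute: "kms_tridiag n \<rho> i j = kms_tridiag n \<rho> j i"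
  by (auto simp: kms_tridiag_def)

lemma kms_tridiag_row:
  assumes "i < n"
  shows "(\<Sum>j<n. kms_tridiag n \<rho> i j * f j) = (if i = 0 \<or> i = n - 1 then 1 else 1 + \<rho>\<^sup>2) * f i
           - (if 0 < i then \<rho> * f (i - 1) else 0) - (if i + 1 < n then \<rho> * f (i + 1) else 0)"
proof -
  have "(\<Sum>j<n. kms_tridiag n \<rho> i j * f j)
      = (\<Sum>j<n. if j = i then (if i = 0 \<or> i = n - 1 then 1 else 1 + \<rho>\<^sup>2) * f i else 0)
        - (\<Sum>j<n. if Suc j = i then \<rho> * f j else 0) - (\<Sum>j<n. if j = i + 1 then \<rho> * f j else 0)"
    unfolding sum_subtractf[symmetric] by (intro sum.cong) (auto simp: kms_tridiag_def)
  moreover have "(\<Sum>j<n. if Suc j = i then \<rho> * f j else 0) = (if 0 < i then \<rho> * f (i - 1) else 0)"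
    using assms by (cases i) (simp_all add: sum.delta)
  ultimately show ?thesis using assms by (simp add: sum.delta)
qed

lemma KMS_mult_kms_tridiag:
  assumes "n \<ge> 2" and "i < n" and "j < n"
  shows "(\<Sum>k<n. \<rho> ^ nat_dist i k * kms_tridiag n \<rho> k j) = (if i = j then 1 - \<rho>\<^sup>2 else 0)"
proof -
  have "(\<Sum>k<n. \<rho> ^ nat_dist i k * kms_tridiag n \<rho> k j) = (\<Sum>k<n. kms_tridiag n \<rho> j k * \<rho> ^ nat_dist i k)"
    by (simp add: kms_tridiag_commute mult.commute)
  also have "\<dots> = (if j = 0 \<or> j = n - 1 then 1 else 1 + \<rho>\<^sup>2) * \<rho> ^ nat_dist i j
      - (if 0 < j then \<rho> * \<rho> ^ nat_dist i (j - 1) else 0)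
      - (if j + 1 < n then \<rho> * \<rho> ^ nat_dist i (j + 1) else 0)"
    using assms(3) by (rule kms_tridiag_row)
  also have "\<dots> = (if i = j then 1 - \<rho>\<^sup>2 else 0)"
  proof -
    consider "i = j" | "i < j" | "j < i" by linarith
    then show ?thesis
    proof cases
      case 1
      consider "j = 0" | "j = n - 1" "0 < j" | "0 < j" "j + 1 < n" using assms(3) by linarith
      then show ?thesis using 1 assms(1) by cases (simp_all add: nat_dist_def power2_eq_square)
    next
      case 2
      then obtain t where "j = Suc (i + t)" using less_imp_Suc_add by blast
      then have "nat_dist i j = Suc t" "nat_dist i (j - 1) = t" "nat_dist i (j + 1) = Suc (Suc t)"
        "0 < j" "j \<noteq> i"
        by (simp_all add: nat_dist_def)
      moreover have "j = n - 1 \<or> j + 1 < n" using assms(3) by linarith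
      ultimately show ?thesis by (auto simp: power2_eq_square algebra_simps)
    next
      case 3
      then obtain t where "i = Suc (j + t)" using less_imp_Suc_add by blast
      then have "nat_dist i j = Suc t" "nat_dist i (j + 1) = t" "j + 1 < n" "j \<noteq> n - 1" "j \<noteq> i"
        "0 < j \<Longrightarrow> nat_dist i (j - 1) = Suc (Suc t)"
        using assms(2) by (simp_all add: nat_dist_def)
      then show ?thesis by (cases "j = 0") (simp_all add: power2_eq_square algebra_simps)
    qed
  qed
  finally show ?thesis .
qed

text \<open>A combination of \<open>z\<^sup>j\<close> and \<open>z\<^sup>-\<^sup>j\<close>, each of which satisfies the interior rows of
  \<open>z \<cdot> kms_tridiag n \<rho> v = (z - \<rho>)(1 - \<rho> z) v\<close>; the coefficients make the first row hold,
  and the last row holds exactly when \<open>z\<close> is a root of \<open>p\<^sub>2\<^sub>n\<close>.\<close>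

definition kms_root_vector :: "nat \<Rightarrow> complex \<Rightarrow> complex \<Rightarrow> nat \<Rightarrow> complex" where
  "kms_root_vector n \<rho> z j = (\<rho> - z) * z ^ (n + j + 1) + (1 - \<rho> * z) * z ^ (n - j)"

lemma kms_root_vector_first:
  assumes "n \<ge> 1"
  shows "z * (kms_root_vector n \<rho> z 0 - \<rho> * kms_root_vector n \<rho> z 1)
    = (z - \<rho>) * (1 - \<rho> * z) * kms_root_vector n \<rho> z 0"
proof -
  define Y where "Y = z ^ (n - 1)"
  have "n + 0 + 1 = (n - 1) + 2" "n - 0 = (n - 1) + 1" "n + 1 + 1 = (n - 1) + 3"
    using assms by simp_all
  then have vs: "kms_root_vector n \<rho> z 0 = (\<rho> - z) * Y * z\<^sup>2 + (1 - \<rho> * z) * Y * z"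
    "kms_root_vector n \<rho> z 1 = (\<rho> - z) * Y * z ^ 3 + (1 - \<rho> * z) * Y"
    unfolding kms_root_vector_def Y_def by (simp_all only: power_add) (simp_all add: algebra_simps)
  show ?thesis unfolding vs by (simp add: power2_eq_square power3_eq_cube algebra_simps)
qed

lemma kms_root_vector_interior:
  assumes "0 < i" and "i + 1 < n"
  shows "z * ((1 + \<rho>\<^sup>2) * kms_root_vector n \<rho> z i - \<rho> * kms_root_vector n \<rho> z (i - 1)
      - \<rho> * kms_root_vector n \<rho> z (i + 1)) = (z - \<rho>) * (1 - \<rho> * z) * kms_root_vector n \<rho> z i"
proof -
  define X Y where "X = z ^ (n + i)" and "Y = z ^ (n - i - 1)"
  have "n + (i - 1) + 1 = n + i" "n - (i - 1) = (n - i - 1) + 2" "n + i + 1 = (n + i) + 1"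
    "n - i = (n - i - 1) + 1" "n + (i + 1) + 1 = (n + i) + 2" "n - (i + 1) = n - i - 1"
    using assms by simp_all
  then have vs: "kms_root_vector n \<rho> z (i - 1) = (\<rho> - z) * X + (1 - \<rho> * z) * Y * z\<^sup>2"
    "kms_root_vector n \<rho> z i = (\<rho> - z) * X * z + (1 - \<rho> * z) * Y * z"
    "kms_root_vector n \<rho> z (i + 1) = (\<rho> - z) * X * z\<^sup>2 + (1 - \<rho> * z) * Y"
    unfolding kms_root_vector_def X_def Y_def by (simp_all only: power_add) (simp_all add: algebra_simps)
  show ?thesis unfolding vs by (simp add: power2_eq_square algebra_simps)
qed

lemma kms_root_vector_last:
  assumes "n \<ge> 2" and root: "z ^ (2 * n) * (z - \<rho>)\<^sup>2 = (1 - \<rho> * z)\<^sup>2"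
  shows "z * (kms_root_vector n \<rho> z (n - 1) - \<rho> * kms_root_vector n \<rho> z (n - 2))
    = (z - \<rho>) * (1 - \<rho> * z) * kms_root_vector n \<rho> z (n - 1)"
proof -
  define W where "W = z ^ (2 * n - 1)"
  have W: "z ^ (2 * n) = W * z" unfolding W_def using assms(1) by (simp flip: power_Suc2)
  have "n + (n - 1) + 1 = 2 * n" "n - (n - 1) = 1" "n + (n - 2) + 1 = 2 * n - 1" "n - (n - 2) = 2"
    using assms(1) by simp_all
  then have vs: "kms_root_vector n \<rho> z (n - 1) = (\<rho> - z) * W * z + (1 - \<rho> * z) * z"
    "kms_root_vector n \<rho> z (n - 2) = (\<rho> - z) * W + (1 - \<rho> * z) * z\<^sup>2"
    unfolding kms_root_vector_def by (simp_all only: W W_def[symmetric] power_one_right mult.assoc)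
  have "W * z * (z - \<rho>)\<^sup>2 = (1 - \<rho> * z)\<^sup>2" using root W by simp
  moreover have "z * (((\<rho> - z) * W * z + (1 - \<rho> * z) * z) - \<rho> * ((\<rho> - z) * W + (1 - \<rho> * z) * z\<^sup>2))
        - (z - \<rho>) * (1 - \<rho> * z) * ((\<rho> - z) * W * z + (1 - \<rho> * z) * z)
      = - \<rho> * z * (W * z * (z - \<rho>)\<^sup>2 - (1 - \<rho> * z)\<^sup>2)"
    by (simp add: power2_eq_square algebra_simps)
  ultimately show ?thesis unfolding vs by simp
qed

lemma kms_tridiag_root_vector:
  assumes "n \<ge> 2" and "i < n" and root: "z ^ (2 * n) * (z - \<rho>)\<^sup>2 = (1 - \<rho> * z)\<^sup>2"
  shows "z * (\<Sum>j<n. kms_tridiag n \<rho> i j * kms_root_vector n \<rho> z j)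
    = (z - \<rho>) * (1 - \<rho> * z) * kms_root_vector n \<rho> z i"
proof -
  note row = kms_tridiag_row[OF assms(2), of \<rho> "kms_root_vector n \<rho> z"]
  consider "i = 0" | "0 < i" "i + 1 < n" | "i = n - 1" "0 < i" using assms(1,2) by linarith
  then show ?thesis
  proof cases
    case 1
    then show ?thesis unfolding row using kms_root_vector_first[of n z \<rho>] assms(1) by simp
  next
    case 2
    then have "i \<noteq> n - 1" by linarith
    then show ?thesis unfolding row using kms_root_vector_interior[OF 2, of z \<rho>] 2 by simp
  next
    case 3
    then show ?thesis unfolding row using kms_root_vector_last[OF assms(1) root] assms(1)
      by (simp add: numeral_2_eq_2)
  qed
qed

lemma KMS_mult_root_vector:
  assumes n: "n \<ge> 2" and "i < n" and root: "z ^ (2 * n) * (z - \<rho>)\<^sup>2 = (1 - \<rho> * z)\<^sup>2"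
  defines "v \<equiv> vec n (kms_root_vector n \<rho> z)"
  shows "(z - \<rho>) * (1 - \<rho> * z) * (KMS n \<rho> *\<^sub>v v) $ i = (1 - \<rho>\<^sup>2) * z * v $ i"
proof -
  define \<mu> where "\<mu> = (z - \<rho>) * (1 - \<rho> * z)"
  have tridiag_v: "\<mu> * v $ k = z * (\<Sum>j<n. kms_tridiag n \<rho> k j * v $ j)" if "k < n" for k
  proof -
    have "(\<Sum>j<n. kms_tridiag n \<rho> k j * v $ j) = (\<Sum>j<n. kms_tridiag n \<rho> k j * kms_root_vector n \<rho> z j)"
      by (intro sum.cong) (simp_all add: v_def)
    then show ?thesis using kms_tridiag_root_vector[OF n that root] that by (simp add: \<mu>_def v_def)
  qed
  have "\<mu> * (KMS n \<rho> *\<^sub>v v) $ i = (\<Sum>k<n. \<rho> ^ nat_dist i k * (\<mu> * v $ k))"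
    using assms(2) by (simp add: v_def KMS_mult_vec_index sum_distrib_left mult_ac)
  also have "\<dots> = (\<Sum>k<n. \<Sum>j<n. z * (\<rho> ^ nat_dist i k * kms_tridiag n \<rho> k j * v $ j))"
    by (intro sum.cong refl) (simp add: tridiag_v sum_distrib_left mult_ac)
  also have "\<dots> = (\<Sum>j<n. \<Sum>k<n. z * (\<rho> ^ nat_dist i k * kms_tridiag n \<rho> k j * v $ j))"
    by (rule sum.swap)
  also have "\<dots> = z * (\<Sum>j<n. (\<Sum>k<n. \<rho> ^ nat_dist i k * kms_tridiag n \<rho> k j) * v $ j)"
    by (simp add: sum_distrib_left sum_distrib_right mult_ac)
  also have "\<dots> = z * (\<Sum>j<n. if j = i then (1 - \<rho>\<^sup>2) * v $ j else 0)"
    using assms(2) by (intro arg_cong[where f = "(*) z"] sum.cong refl)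
      (simp add: KMS_mult_kms_tridiag[OF n])
  also have "\<dots> = (1 - \<rho>\<^sup>2) * z * v $ i" using assms(2) by simp
  finally show ?thesis unfolding \<mu>_def .
qed

lemma KMS_root_eigenvalue:
  assumes n: "n \<ge> 2" and "\<rho>\<^sup>2 \<noteq> 1" and "p2n n \<rho> z = 0" and "z\<^sup>2 \<noteq> 1"
  shows "eigenvalue (KMS n \<rho>) ((1 - \<rho>\<^sup>2) * z / ((z - \<rho>) * (1 - \<rho> * z)))"
proof -
  define \<mu> where "\<mu> = (z - \<rho>) * (1 - \<rho> * z)"
  define v where "v = vec n (kms_root_vector n \<rho> z)"
  have "\<mu> \<noteq> 0" "z \<noteq> 0" using p2n_root_factors_nonzero[of n \<rho> z] assms by (simp_all add: \<mu>_def)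
  have root: "z ^ (2 * n) * (z - \<rho>)\<^sup>2 = (1 - \<rho> * z)\<^sup>2"
    using p2n_eq_0_iff[of n z \<rho>] assms
    by (simp add: power_mult_distrib power_mult[symmetric] mult.commute[of 2])
  have v: "v \<in> carrier_vec n" and dim_v: "dim_vec v = n" by (simp_all add: v_def)
  have "v $ 0 = z ^ n * (1 - z\<^sup>2)"
    using n by (simp add: v_def kms_root_vector_def power2_eq_square algebra_simps)
  then have "v \<noteq> 0\<^sub>v n" using n assms(4) \<open>z \<noteq> 0\<close> by (auto dest!: arg_cong[of _ _ "\<lambda>w. w $ 0"])
  moreover have "KMS n \<rho> *\<^sub>v v = ((1 - \<rho>\<^sup>2) * z / \<mu>) \<cdot>\<^sub>v v"
  proof (rule eq_vecI)
    fix i assume "i < dim_vec (((1 - \<rho>\<^sup>2) * z / \<mu>) \<cdot>\<^sub>v v)"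
    then have i: "i < n" by (simp add: dim_v)
    show "(KMS n \<rho> *\<^sub>v v) $ i = (((1 - \<rho>\<^sup>2) * z / \<mu>) \<cdot>\<^sub>v v) $ i"
      using KMS_mult_root_vector[OF n i root] i \<open>\<mu> \<noteq> 0\<close>
      by (simp add: \<mu>_def v_def field_simps)
  qed (simp add: KMS_def dim_v)
  moreover have "dim_row (KMS n \<rho>) = n" by (simp add: KMS_def)
  ultimately show ?thesis
    using v unfolding eigenvalue_def eigenvector_def \<mu>_def by auto
qed

lemma KMS_eigenvalues_in_sigma_range_imp_unimodular_roots:
  assumes "n \<ge> 2" and "\<rho>\<^sup>2 \<noteq> 1" and "\<rho> \<noteq> 0"
    and eigen: "\<forall>e. eigenvalue (KMS n \<rho>) e \<longrightarrow> e \<in> sigma_range \<rho>" and "p2n n \<rho> z = 0"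
  shows "cmod z = 1"
proof (cases "z\<^sup>2 = 1")
  case True
  then show ?thesis by (auto simp: power2_eq_1_iff)
next
  case False
  define \<mu> where "\<mu> = (z - \<rho>) * (1 - \<rho> * z)"
  have "\<mu> \<noteq> 0" using p2n_root_factors_nonzero[of n \<rho> z] assms by (simp add: \<mu>_def)
  have "(1 - \<rho>\<^sup>2) * z / \<mu> \<in> sigma_range \<rho>"
    using eigen KMS_root_eigenvalue[OF assms(1,2,5) False] by (simp add: \<mu>_def)
  then obtain \<theta> where \<theta>: "(1 - \<rho>\<^sup>2) * z / \<mu> = sigma \<rho> \<theta>"
      "1 - 2 * \<rho> * complex_of_real (cos \<theta>) + \<rho>\<^sup>2 \<noteq> 0"
    unfolding sigma_range_def by blast
  define c where "c = complex_of_real (cos \<theta>)"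
  have "(1 - \<rho>\<^sup>2) * (z * (1 - 2 * \<rho> * c + \<rho>\<^sup>2)) = (1 - \<rho>\<^sup>2) * \<mu>"
    using \<theta> \<open>\<mu> \<noteq> 0\<close> by (simp add: sigma_def c_def field_simps)
  then have "z * (1 - 2 * \<rho> * c + \<rho>\<^sup>2) = \<mu>" using assms(2) by simp
  then have "\<rho> * (z\<^sup>2 - 2 * c * z + 1) = 0"
    by (simp add: \<mu>_def power2_eq_square algebra_simps)
  then have "z\<^sup>2 - 2 * c * z + 1 = 0" using assms(3) by simp
  moreover have "(z - cis \<theta>) * (z - cis (- \<theta>))
      = z\<^sup>2 - (cis \<theta> + cis (- \<theta>)) * z + cis \<theta> * cis (- \<theta>)"
    by (simp add: power2_eq_square algebra_simps)
  moreover have "cis \<theta> + cis (- \<theta>) = 2 * c" by (simp add: c_def complex_eq_iff)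
  moreover have "cis \<theta> * cis (- \<theta>) = 1" by (simp add: cis_mult)
  ultimately have "(z - cis \<theta>) * (z - cis (- \<theta>)) = 0" by simp
  then show ?thesis by auto
qed

lemma real_unit_interval_iff:
  "(\<rho> \<in> \<real> \<and> -1 < Re \<rho> \<and> Re \<rho> < 1) \<longleftrightarrow> (\<exists>r. \<rho> = complex_of_real r \<and> \<bar>r\<bar> < 1)"
  by (auto elim!: Reals_cases)

theorem theorem3p5:
  fixes n :: nat and \<rho> :: complex
  assumes "n \<ge> 2" and "\<rho> \<noteq> 1" and "\<rho> \<noteq> -1"
  shows "((\<forall>e. eigenvalue (KMS n \<rho>) e \<longrightarrow> e \<in> sigma_range \<rho>)
           \<longleftrightarrow> (\<forall>z. p2n n \<rho> z = 0 \<longrightarrow> cmod z = 1))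
       \<and> ((\<forall>z. p2n n \<rho> z = 0 \<longrightarrow> cmod z = 1)
           \<longleftrightarrow> (\<rho> \<in> \<real> \<and> -1 < Re \<rho> \<and> Re \<rho> < 1))
       \<and> ((\<rho> \<in> \<real> \<and> -1 < Re \<rho> \<and> Re \<rho> < 1)
           \<longleftrightarrow> pos_def_mat n (KMS n \<rho>))"
proof -
  let ?A = "\<forall>e. eigenvalue (KMS n \<rho>) e \<longrightarrow> e \<in> sigma_range \<rho>"
  let ?B = "\<forall>z. p2n n \<rho> z = 0 \<longrightarrow> cmod z = 1"
  let ?C = "\<rho> \<in> \<real> \<and> -1 < Re \<rho> \<and> Re \<rho> < 1"
  have n: "n \<ge> 1" and \<rho>: "\<rho>\<^sup>2 \<noteq> 1" using assms by (auto simp: power2_eq_1_iff)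
  have C_A: ?A if ?C using that KMS_eigenvalue_in_sigma_range by (auto simp: real_unit_interval_iff)
  have C_B: ?B if ?C using that p2n_root_norm_eq_1[OF n] by (auto simp: real_unit_interval_iff)
  have B_C: ?C if ?B
  proof -
    have "\<rho> \<in> \<real>" using p2n_unimodular_roots_imp_real[OF n] \<open>?B\<close> by blast
    then obtain r where r: "\<rho> = of_real r" by (rule Reals_cases)
    with \<rho> have "\<bar>r\<bar> \<noteq> 1" by (auto simp: abs_if)
    moreover have "\<not> \<bar>r\<bar> > 1" using p2n_root_off_circle[OF n] \<open>?B\<close> r by blast
    ultimately show ?C using r by (simp add: real_unit_interval_iff) linarith
  qed
  have A_B: ?B if ?A
    using that KMS_eigenvalues_in_sigma_range_imp_unimodular_roots[OF assms(1) \<rho>] C_B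
    by (cases "\<rho> = 0") auto
  have "?C \<longleftrightarrow> pos_def_mat n (KMS n \<rho>)"
    using KMS_pos_def KMS_pos_def_imp_real_unit_interval[OF assms(1)]
    by (auto simp: real_unit_interval_iff)
  with A_B B_C C_A C_B show ?thesis by blast
qed

end
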